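(* Let $d\ge1$ and consider the cubical cell structure on $\mathbb{R}^d$ given by $\mathbb{Z}^d$. For every integer $m\ge 1$ and all $\mathbb{Z}_2$-valued cochains $\alpha,\beta$ on this cell structure, $$\delta(\alpha\cup_m\beta)=\delta\alpha\cup_m\beta+\alpha\cup_m\delta\beta+\alpha\cup_{m-1}\beta+\beta\cup_{m-1}\alpha,$$ where $\cup_m$ are the hypercubic higher cup products defined in the context.
   Context: Cell structure: the $k$-cells are the integer translates of the $k$-dimensional faces of unit cubes of $\mathbb{Z}^d$. A $k$-cell $c$ spans coordinate directions $i_1<\dots<i_k$. Its subcells are labelled by words $w\in\{+,-,\bullet\}^k$: the cell $c(w)$ fixes $x_{i_r}$ at its maximal (resp. minimal) value on $c$ when $w_r=+$ (resp. $-$), and lets $x_{i_r}$ vary when $w_r=\bullet$. A $\mathbb{Z}_2$-valued $p$-cochain is a function from $p$-cells to $\mathbb{Z}_2$, taken to be zero on cells of other dimensions. The coboundary is $(\delta\alpha)(c)=\sum\alpha(c(w))$ over the words $w$ with exactly one entry in $\{+,-\}$. Higher cup products: for $m\ge0$, a $p$-cochain $\alpha$ and a $q$-cochain $\beta$, and a $k$-cell $c$ with $k=p+q-m$, $$(\alpha\cup_m\beta)(c)=\sum_{1\le l_1<\dots<l_m\le k}\sum_{(w,w')}\alpha(c(w))\beta(c(w')).$$ The inner sum runs over pairs of words with $w_{l_r}=w'_{l_r}=\bullet$ for all $r$. For each position $s\notin\{l_r\}$, let $\ell(s)=\#\{r:l_r<s\}$ and $\sigma_s=(-1)^{\ell(s)}\in\{+,-\}$.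 Then $(w_s,w'_s)\in\{(\sigma_s,\bullet),(\bullet,-\sigma_s)\}$. Terms whose faces have the wrong dimensions for $\alpha$ or $\beta$ vanish. *)

theory Defs
  imports Main "HOL-Library.Z2"
begin

text \<open>Letters of subcell words: Pl = +, Mi = -, Bu = bullet.\<close>
datatype sgn = Pl | Mi | Bu

text \<open>A cell is given by its minimal corner x and the set S of spanned directions:
  the cell is the product of [x_j, x_j+1] for j in S and {x_j} for j not in S.\<close>
type_synonym cell = "(nat \<Rightarrow> int) \<times> nat set"

definition valid_cell :: "nat \<Rightarrow> cell \<Rightarrow> bool" where
  "valid_cell d c \<longleftrightarrow> snd c \<subseteq> {..<d} \<and> (\<forall>j\<ge>d. fst c j = 0)"

definition cdim :: "cell \<Rightarrow> nat" where
  "cdim c = card (snd c)"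

text \<open>Spanned directions i_1 < ... < i_k (0-based list).\<close>
definition dirs :: "cell \<Rightarrow> nat list" where
  "dirs c = sorted_list_of_set (snd c)"

definition face :: "cell \<Rightarrow> sgn list \<Rightarrow> cell" where
  "face c w =
     ((\<lambda>j. fst c j + (if \<exists>r<cdim c. dirs c ! r = j \<and> w ! r = Pl then 1 else 0)),
      {dirs c ! r | r. r < cdim c \<and> w ! r = Bu})"

definition words :: "nat \<Rightarrow> sgn list set" where
  "words k = {w. set w \<subseteq> {Pl, Mi, Bu} \<and> length w = k}"

definition cochain :: "nat \<Rightarrow> nat \<Rightarrow> (cell \<Rightarrow> bit) \<Rightarrow> bool" where
  "cochain d p \<alpha> \<longleftrightarrow> (\<forall>c. \<alpha> c \<noteq> 0 \<longrightarrow> valid_cell d c \<and> cdim c = p)"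

definition coboundary :: "(cell \<Rightarrow> bit) \<Rightarrow> cell \<Rightarrow> bit" where
  "coboundary \<alpha> c =
     (\<Sum>w\<in>{w \<in> words (cdim c). length (filter (\<lambda>a. a \<noteq> Bu) w) = 1}. \<alpha> (face c w))"

definition neg_sgn :: "sgn \<Rightarrow> sgn" where
  "neg_sgn a = (case a of Pl \<Rightarrow> Mi | Mi \<Rightarrow> Pl | Bu \<Rightarrow> Bu)"

text \<open>sigma_s = (-1)^(number of l_r < s); positions are 0-based.\<close>
definition sigma :: "nat set \<Rightarrow> nat \<Rightarrow> sgn" where
  "sigma L s = (if even (card {r \<in> L. r < s}) then Pl else Mi)"

definition cup_pairs :: "nat \<Rightarrow> nat set \<Rightarrow> (sgn list \<times> sgn list) set" where
  "cup_pairs k L = {(w, w'). w \<in> words k \<and> w' \<in> words k \<and>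
      (\<forall>s<k. if s \<in> L then w ! s = Bu \<and> w' ! s = Bu
             else (w ! s, w' ! s) \<in> {(sigma L s, Bu), (Bu, neg_sgn (sigma L s))})}"

text \<open>Higher cup product; terms with faces of wrong dimension vanish automatically
  since cochains are zero off their degree.\<close>
definition cup :: "nat \<Rightarrow> (cell \<Rightarrow> bit) \<Rightarrow> (cell \<Rightarrow> bit) \<Rightarrow> cell \<Rightarrow> bit" where
  "cup m \<alpha> \<beta> c =
     (\<Sum>L\<in>{L. L \<subseteq> {..<cdim c} \<and> card L = m}.
        \<Sum>(w, w')\<in>cup_pairs (cdim c) L. \<alpha> (face c w) * \<beta> (face c w'))"

end

theory Submission
  imports Defs
begin

(*
  Index the subcells of a cell by maps from its directions to letters.  A term of
  \<alpha> \<union>\<^sub>m \<beta> is then a sum over pairs of such maps constrained direction by direction, and \<delta>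
  refines one bullet at one direction.  For fixed L and direction i, the terms of \<delta>(\<alpha> \<union>\<^sub>m \<beta>),
  \<delta>\<alpha> \<union>\<^sub>m \<beta> and \<alpha> \<union>\<^sub>m \<delta>\<beta> cancel over \<int>\<^sub>2 unless i \<in> L, where they add up to the sum over
  the four letter pairs with a single bullet at i.  Writing L = L\<^sub>0 \<union> {i}, this is the sum of two
  configurations that use the letters of L\<^sub>0 below i and their swaps above i.  Summed over i it
  telescopes between the letters of L\<^sub>0 everywhere, giving \<alpha> \<union>\<^bsub>m-1\<^esub> \<beta>, and their swaps
  everywhere, giving \<beta> \<union>\<^bsub>m-1\<^esub> \<alpha>.
*)

instance sgn :: finite
proof
  have "(UNIV :: sgn set) = {Pl, Mi, Bu}"
    using sgn.exhaust by auto
  then show "finite (UNIV :: sgn set)"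
    by (metis finite.emptyI finite_insert)
qed

(* Otherwise simp turns + and * on bit into XOR and AND, and ring reasoning stops working. *)
declare add_bit_eq_xor [simp del] mult_bit_eq_and [simp del]

lemma bit_add_eq_iff: "(x :: bit) + y = z \<longleftrightarrow> x = y + z"
  by auto

lemma neg_sgn_simps [simp]: "neg_sgn Pl = Mi" "neg_sgn Mi = Pl" "neg_sgn Bu = Bu"
  by (simp_all add: neg_sgn_def)

lemma neg_sgn_neg_sgn [simp]: "neg_sgn (neg_sgn a) = a"
  by (cases a) simp_all

lemma sigma_cases: "sigma L s = Pl \<or> sigma L s = Mi"
  by (simp add: sigma_def)

lemma sigma_insert:
  assumes "finite L" "i \<notin> L"
  shows "sigma (insert i L) s = (if i < s then neg_sgn (sigma L s) else sigma L s)"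
proof (cases "i < s")
  case True
  then have "{r \<in> insert i L. r < s} = insert i {r \<in> L. r < s}"
    by auto
  with True assms show ?thesis
    by (simp add: sigma_def)
next
  case False
  then have "{r \<in> insert i L. r < s} = {r \<in> L. r < s}"
    by auto
  with False show ?thesis
    by (simp add: sigma_def)
qed

lemma sigma_nth_image:
  assumes D: "sorted_wrt (<) D" and L: "L \<subseteq> {..<length D}" and s: "s < length D"
  shows "sigma ((!) D ` L) (D ! s) = sigma L s"
proof -
  have inj: "inj_on ((!) D) {..<length D}"
    using D by (simp add: inj_on_nth strict_sorted_iff)
  have "D ! r < D ! s \<longleftrightarrow> r < s" if "r < length D" for r
    using sorted_wrt_nth_less[OF D _ s] sorted_wrt_nth_less[OF D _ that] that
    by (metis less_asym linorder_neqE_nat)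
  then have "{r \<in> (!) D ` L. r < D ! s} = (!) D ` {r \<in> L. r < s}"
    using L by auto
  moreover have "card ((!) D ` {r \<in> L. r < s}) = card {r \<in> L. r < s}"
    using L by (intro card_image inj_on_subset[OF inj]) auto
  ultimately show ?thesis
    by (simp add: sigma_def)
qed

lemma words_eq: "words k = {w. length w = k}"
  unfolding words_def by (auto intro: sgn.exhaust)

section \<open>Sign maps\<close>

definition sign_maps :: "nat set \<Rightarrow> (nat \<Rightarrow> sgn) set" where
  "sign_maps S = {\<phi>. \<forall>i. i \<notin> S \<longrightarrow> \<phi> i = Bu}"

definition sign_pairs ::
    "nat set \<Rightarrow> (nat \<Rightarrow> (sgn \<times> sgn) set) \<Rightarrow> ((nat \<Rightarrow> sgn) \<times> (nat \<Rightarrow> sgn)) set" where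
  "sign_pairs S P =
     {(\<phi>, \<psi>). \<phi> \<in> sign_maps S \<and> \<psi> \<in> sign_maps S \<and> (\<forall>i\<in>S. (\<phi> i, \<psi> i) \<in> P i)}"

lemma finite_sign_maps: "finite S \<Longrightarrow> finite (sign_maps S)"
  using finite_set_of_finite_funs[of S UNIV Bu] by (simp add: sign_maps_def)

lemma finite_sign_pairs: "finite S \<Longrightarrow> finite (sign_pairs S P)"
  by (rule finite_subset[of _ "sign_maps S \<times> sign_maps S"])
    (auto simp: sign_pairs_def finite_sign_maps)

lemma sign_pairs_cong: "(\<And>i. i \<in> S \<Longrightarrow> P i = Q i) \<Longrightarrow> sign_pairs S P = sign_pairs S Q"
  by (auto simp: sign_pairs_def)

lemma sign_pairs_insert:
  "i \<notin> S \<Longrightarrow> sign_pairs S P = sign_pairs (insert i S) (P(i := {(Bu, Bu)}))"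
  by (auto simp: sign_pairs_def sign_maps_def)

lemma sign_pairs_fun_upd_singleton:
  assumes "(\<phi>, \<psi>) \<in> sign_pairs S (P(i := {q}))" "i \<in> S"
  shows "\<phi> i = fst q \<and> \<psi> i = snd q"
proof -
  from assms have "(\<phi> i, \<psi> i) \<in> (P(i := {q})) i"
    unfolding sign_pairs_def by blast
  then show ?thesis
    by auto
qed

lemma sum_sign_pairs_split:
  assumes "finite S" "i \<in> S"
  shows "sum f (sign_pairs S P) = (\<Sum>q\<in>P i. sum f (sign_pairs S (P(i := {q}))))"
proof -
  have "sign_pairs S P = (\<Union>q\<in>P i. sign_pairs S (P(i := {q})))"
    using assms(2) by (auto simp: sign_pairs_def)
  moreover have "sign_pairs S (P(i := {q})) \<inter> sign_pairs S (P(i := {q'})) = {}" if "q \<noteq> q'" for q q'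
    using that assms(2) by (auto simp: sign_pairs_def)
  ultimately show ?thesis
    by (simp add: sum.UNION_disjoint finite_sign_pairs assms(1))
qed

lemma sum_sign_pairs_fun_upd:
  assumes "i \<in> S"
  shows "(\<Sum>(\<phi>, \<psi>)\<in>sign_pairs S (P(i := {q})). f (\<phi>(i := a)) (\<psi>(i := b)))
       = (\<Sum>(\<phi>, \<psi>)\<in>sign_pairs S (P(i := {(a, b)})). f \<phi> \<psi>)"
proof -
  let ?upd = "\<lambda>a b (\<phi> :: nat \<Rightarrow> sgn, \<psi> :: nat \<Rightarrow> sgn). (\<phi>(i := a), \<psi>(i := b))"
  have "bij_betw (?upd a b) (sign_pairs S (P(i := {q}))) (sign_pairs S (P(i := {(a, b)})))"
    by (rule bij_betw_byWitness[where f' = "?upd (fst q) (snd q)"])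
      (use assms in \<open>auto simp: sign_pairs_def sign_maps_def\<close>)
  from sum.reindex_bij_betw[OF this, of "\<lambda>(\<phi>, \<psi>). f \<phi> \<psi>"] show ?thesis
    by (simp add: case_prod_beta)
qed

lemma sum_sign_pairs_swap:
  "(\<Sum>(\<phi>, \<psi>)\<in>sign_pairs S P. f \<psi> \<phi>) = (\<Sum>(\<phi>, \<psi>)\<in>sign_pairs S (\<lambda>i. prod.swap ` P i). f \<phi> \<psi>)"
proof -
  have "bij_betw prod.swap (sign_pairs S P) (sign_pairs S (\<lambda>i. prod.swap ` P i))"
    by (rule bij_betw_byWitness[where f' = prod.swap]) (auto simp: sign_pairs_def)
  from sum.reindex_bij_betw[OF this, of "\<lambda>(\<phi>, \<psi>). f \<phi> \<psi>"] show ?thesis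
    by (simp add: case_prod_beta)
qed

lemma bij_betw_map_sign_maps:
  assumes "distinct D"
  shows "bij_betw (\<lambda>\<phi>. map \<phi> D) (sign_maps (set D)) {w. length w = length D}"
proof (rule bij_betw_imageI)
  show "inj_on (\<lambda>\<phi>. map \<phi> D) (sign_maps (set D))"
    by (rule inj_onI) (auto simp: sign_maps_def fun_eq_iff map_eq_conv)
  show "(\<lambda>\<phi>. map \<phi> D) ` sign_maps (set D) = {w. length w = length D}"
  proof (intro equalityI subsetI)
    fix w :: "sgn list"
    assume "w \<in> {w. length w = length D}"
    then have len: "length w = length D"
      by simp
    define \<phi> where "\<phi> i = (case map_of (zip D w) i of None \<Rightarrow> Bu | Some e \<Rightarrow> e)" for i
    have "map \<phi> D = w"
      using len assms by (intro nth_equalityI) (auto simp: \<phi>_def map_of_zip_nth)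
    moreover have "\<phi> \<in> sign_maps (set D)"
      by (auto simp: sign_maps_def \<phi>_def split: option.split dest: map_of_SomeD set_zip_leftD)
    ultimately show "w \<in> (\<lambda>\<phi>. map \<phi> D) ` sign_maps (set D)"
      by blast
  qed auto
qed

lemma bij_betw_unit_sign_maps:
  "bij_betw (\<lambda>(j, e). (\<lambda>_. Bu)(j := e)) (S \<times> {Pl, Mi})
     {\<phi> \<in> sign_maps S. card {i. \<phi> i \<noteq> Bu} = 1}"
proof (rule bij_betw_imageI)
  show "inj_on (\<lambda>(j, e). (\<lambda>_. Bu)(j := e)) (S \<times> {Pl, Mi})"
    by (rule inj_onI) (auto simp: fun_eq_iff split: if_splits)
  show "(\<lambda>(j, e). (\<lambda>_. Bu)(j := e)) ` (S \<times> {Pl, Mi}) = {\<phi> \<in> sign_maps S. card {i. \<phi> i \<noteq> Bu} = 1}"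
  proof (intro equalityI subsetI)
    fix \<phi>
    assume "\<phi> \<in> (\<lambda>(j, e). (\<lambda>_. Bu)(j := e)) ` (S \<times> {Pl, Mi})"
    then obtain j e where "\<phi> = (\<lambda>_. Bu)(j := e)" "j \<in> S" "e \<in> {Pl, Mi}"
      by auto
    moreover from this have "{i. \<phi> i \<noteq> Bu} = {j}"
      by auto
    ultimately show "\<phi> \<in> {\<phi> \<in> sign_maps S. card {i. \<phi> i \<noteq> Bu} = 1}"
      by (auto simp: sign_maps_def)
  next
    fix \<phi>
    assume \<phi>: "\<phi> \<in> {\<phi> \<in> sign_maps S. card {i. \<phi> i \<noteq> Bu} = 1}"
    then obtain j where j: "{i. \<phi> i \<noteq> Bu} = {j}"
      by (auto simp: card_1_singleton_iff)
    then have "\<phi> = (\<lambda>_. Bu)(j := \<phi> j)"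
      by (auto simp: fun_eq_iff)
    moreover have "j \<in> S" "\<phi> j \<in> {Pl, Mi}"
      using \<phi> j by (auto simp: sign_maps_def intro: sgn.exhaust[of "\<phi> j"])
    ultimately show "\<phi> \<in> (\<lambda>(j, e). (\<lambda>_. Bu)(j := e)) ` (S \<times> {Pl, Mi})"
      by force
  qed
qed

section \<open>Coboundary and cup products over directions\<close>

(* face, coboundary and cup index the subcells of c by words over the positions of dirs c; from
   here on they are indexed by sign maps on the directions themselves, which removes all list
   indexing. *)
definition subcell :: "cell \<Rightarrow> (nat \<Rightarrow> sgn) \<Rightarrow> cell" where
  "subcell c \<phi> =
     ((\<lambda>j. fst c j + (if j \<in> snd c \<and> \<phi> j = Pl then 1 else 0)), {j \<in> snd c. \<phi> j = Bu})"

lemma snd_subcell: "snd (subcell c \<phi>) = {j \<in> snd c. \<phi> j = Bu}"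
  by (simp add: subcell_def)

lemma subcell_subcell:
  "subcell (subcell c \<phi>) \<psi> = subcell c (\<lambda>i. if \<phi> i = Bu then \<psi> i else \<phi> i)"
  by (auto simp: subcell_def fun_eq_iff)

lemma dirs_props:
  assumes "finite (snd c)"
  shows "set (dirs c) = snd c" "distinct (dirs c)" "length (dirs c) = cdim c"
    "sorted_wrt (<) (dirs c)"
  using assms by (simp_all add: dirs_def cdim_def)

lemma face_map_dirs:
  assumes "finite (snd c)"
  shows "face c (map \<phi> (dirs c)) = subcell c \<phi>"
proof -
  note D = dirs_props[OF assms]
  have "(\<exists>r<cdim c. dirs c ! r = j \<and> map \<phi> (dirs c) ! r = Pl) \<longleftrightarrow> j \<in> snd c \<and> \<phi> j = Pl" for j
    using D(1,3)[symmetric] by (auto simp: in_set_conv_nth)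
  moreover have "{dirs c ! r | r. r < cdim c \<and> map \<phi> (dirs c) ! r = Bu} = {j \<in> snd c. \<phi> j = Bu}"
    using D(1,3)[symmetric] by (auto simp: in_set_conv_nth)
  ultimately show ?thesis
    unfolding face_def subcell_def by simp
qed

definition coboundary_dirs :: "(cell \<Rightarrow> bit) \<Rightarrow> cell \<Rightarrow> bit" where
  "coboundary_dirs \<alpha> c = (\<Sum>j\<in>snd c. \<Sum>e\<in>{Pl, Mi}. \<alpha> (subcell c ((\<lambda>_. Bu)(j := e))))"

definition cup_letters :: "nat set \<Rightarrow> nat \<Rightarrow> (sgn \<times> sgn) set" where
  "cup_letters L i =
     (if i \<in> L then {(Bu, Bu)} else {(sigma L i, Bu), (Bu, neg_sgn (sigma L i))})"

definition cup_sum ::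
    "(cell \<Rightarrow> bit) \<Rightarrow> (cell \<Rightarrow> bit) \<Rightarrow> cell \<Rightarrow> (nat \<Rightarrow> (sgn \<times> sgn) set) \<Rightarrow> bit" where
  "cup_sum \<alpha> \<beta> c P = (\<Sum>(\<phi>, \<psi>)\<in>sign_pairs (snd c) P. \<alpha> (subcell c \<phi>) * \<beta> (subcell c \<psi>))"

definition cup_dirs :: "nat \<Rightarrow> (cell \<Rightarrow> bit) \<Rightarrow> (cell \<Rightarrow> bit) \<Rightarrow> cell \<Rightarrow> bit" where
  "cup_dirs m \<alpha> \<beta> c = (\<Sum>L | L \<subseteq> snd c \<and> card L = m. cup_sum \<alpha> \<beta> c (cup_letters L))"

lemma coboundary_eq_coboundary_dirs:
  assumes fin: "finite (snd c)"
  shows "coboundary \<alpha> c = coboundary_dirs \<alpha> c"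
proof -
  note D = dirs_props[OF fin]
  let ?A = "{\<phi> \<in> sign_maps (snd c). card {i. \<phi> i \<noteq> Bu} = 1}"
  have "length (filter (\<lambda>a. a \<noteq> Bu) (map \<phi> (dirs c))) = card {i. \<phi> i \<noteq> Bu}"
    if "\<phi> \<in> sign_maps (snd c)" for \<phi>
  proof -
    have "{i. \<phi> i \<noteq> Bu} \<inter> set (dirs c) = {i. \<phi> i \<noteq> Bu}"
      using that D(1) by (auto simp: sign_maps_def)
    then show ?thesis
      using distinct_length_filter[OF D(2)] by (simp add: filter_map o_def)
  qed
  then have "bij_betw (\<lambda>\<phi>. map \<phi> (dirs c)) ?A
      {w \<in> words (cdim c). length (filter (\<lambda>a. a \<noteq> Bu) w) = 1}"
    using bij_betw_map_sign_maps[OF D(2)] D(1,3) by (intro bij_betw_Collect) (auto simp: words_eq)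
  then have "coboundary \<alpha> c = (\<Sum>\<phi>\<in>?A. \<alpha> (subcell c \<phi>))"
    unfolding coboundary_def by (simp add: sum.reindex_bij_betw[symmetric] face_map_dirs[OF fin])
  also have "\<dots> = (\<Sum>(j, e)\<in>snd c \<times> {Pl, Mi}. \<alpha> (subcell c ((\<lambda>_. Bu)(j := e))))"
    using sum.reindex_bij_betw[OF bij_betw_unit_sign_maps, of "\<lambda>\<phi>. \<alpha> (subcell c \<phi>)" "snd c"]
    by (simp add: case_prod_beta)
  also have "\<dots> = coboundary_dirs \<alpha> c"
    unfolding coboundary_dirs_def sum.cartesian_product ..
  finally show ?thesis .
qed

lemma sum_cup_pairs_eq_cup_sum:
  assumes fin: "finite (snd c)" and L: "L \<subseteq> {..<cdim c}"
  shows "(\<Sum>(w, w')\<in>cup_pairs (cdim c) L. \<alpha> (face c w) * \<beta> (face c w'))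
       = cup_sum \<alpha> \<beta> c (cup_letters ((!) (dirs c) ` L))"
proof -
  note D = dirs_props[OF fin]
  let ?D = "dirs c" and ?k = "cdim c"
  let ?h = "\<lambda>\<phi>. map \<phi> ?D"
  have inj: "inj_on ((!) ?D) {..<?k}"
    using D by (simp add: inj_on_nth)
  let ?P = "\<lambda>(\<phi>, \<psi>). \<forall>i\<in>snd c. (\<phi> i, \<psi> i) \<in> cup_letters ((!) ?D ` L) i"
  let ?Q = "\<lambda>(w, w'). \<forall>s<?k. if s \<in> L then w ! s = Bu \<and> w' ! s = Bu
      else (w ! s, w' ! s) \<in> {(sigma L s, Bu), (Bu, neg_sgn (sigma L s))}"
  have letters: "?Q (map_prod ?h ?h x) \<longleftrightarrow> ?P x" for x
  proof -
    have "(\<forall>i\<in>snd c. P i) \<longleftrightarrow> (\<forall>s<?k. P (?D ! s))" for P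
      using D(1,3) by (metis in_set_conv_nth)
    moreover have "?D ! s \<in> (!) ?D ` L \<longleftrightarrow> s \<in> L" if "s < ?k" for s
      using inj_on_image_mem_iff[OF inj _ L] that by simp
    ultimately show ?thesis
      using sigma_nth_image[OF D(4), of L] L D(3) by (cases x) (auto simp: cup_letters_def)
  qed
  have "bij_betw (map_prod ?h ?h) (sign_maps (snd c) \<times> sign_maps (snd c)) (words ?k \<times> words ?k)"
    using bij_betw_map_sign_maps[OF D(2)] D(1,3) by (intro bij_betw_map_prod) (simp_all add: words_eq)
  then have "bij_betw (map_prod ?h ?h) {x \<in> sign_maps (snd c) \<times> sign_maps (snd c). ?P x}
      {y \<in> words ?k \<times> words ?k. ?Q y}"
    by (rule bij_betw_Collect) (rule letters)
  moreover have "{x \<in> sign_maps (snd c) \<times> sign_maps (snd c). ?P x}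
      = sign_pairs (snd c) (cup_letters ((!) ?D ` L))"
    by (auto simp: sign_pairs_def)
  moreover have "{y \<in> words ?k \<times> words ?k. ?Q y} = cup_pairs ?k L"
    by (auto simp: cup_pairs_def)
  ultimately show ?thesis
    using sum.reindex_bij_betw[of "map_prod ?h ?h" _ _ "\<lambda>(w, w'). \<alpha> (face c w) * \<beta> (face c w')"]
    by (simp add: cup_sum_def case_prod_beta face_map_dirs[OF fin])
qed

lemma cup_eq_cup_dirs:
  assumes fin: "finite (snd c)"
  shows "cup m \<alpha> \<beta> c = cup_dirs m \<alpha> \<beta> c"
proof -
  note D = dirs_props[OF fin]
  have bij_nth: "bij_betw ((!) (dirs c)) {..<cdim c} (snd c)"
    using D by (intro bij_betw_nth) simp_all
  then have "bij_betw (image ((!) (dirs c))) {L \<in> Pow {..<cdim c}. card L = m} {L \<in> Pow (snd c). card L = m}"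
    by (intro bij_betw_Collect bij_betw_Pow)
      (auto simp: card_image inj_on_subset[OF bij_betw_imp_inj_on[OF bij_nth]])
  then have "cup_dirs m \<alpha> \<beta> c = (\<Sum>L | L \<subseteq> {..<cdim c} \<and> card L = m.
      cup_sum \<alpha> \<beta> c (cup_letters ((!) (dirs c) ` L)))"
    unfolding cup_dirs_def by (simp add: sum.reindex_bij_betw[symmetric] Pow_def)
  also have "\<dots> = cup m \<alpha> \<beta> c"
    unfolding cup_def by (intro sum.cong refl sum_cup_pairs_eq_cup_sum[symmetric] fin) simp
  finally show ?thesis ..
qed

section \<open>The coboundary of a cup product\<close>

lemma cup_sum_split:
  assumes "finite (snd c)" "i \<in> snd c"
  shows "cup_sum \<alpha> \<beta> c P = (\<Sum>q\<in>P i. cup_sum \<alpha> \<beta> c (P(i := {q})))"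
  unfolding cup_sum_def by (rule sum_sign_pairs_split[OF assms])

lemma cup_sum_swap: "cup_sum \<beta> \<alpha> c P = cup_sum \<alpha> \<beta> c (\<lambda>i. prod.swap ` P i)"
  unfolding cup_sum_def
  by (subst sum_sign_pairs_swap[symmetric]) (simp add: mult.commute)

lemma cup_sum_subcell:
  assumes "j \<in> snd c" "e \<noteq> Bu"
  shows "cup_sum \<alpha> \<beta> (subcell c ((\<lambda>_. Bu)(j := e))) P = cup_sum \<alpha> \<beta> c (P(j := {(e, e)}))"
proof -
  let ?u = "(\<lambda>_. Bu)(j := e)"
  have snd_face: "snd (subcell c ?u) = snd c - {j}"
    using assms(2) by (auto simp: snd_subcell)
  have "subcell (subcell c ?u) \<phi> = subcell c (\<phi>(j := e))" for \<phi>
    unfolding subcell_subcell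
    by (rule arg_cong[where f = "subcell c"]) (use assms(2) in \<open>auto simp: fun_eq_iff\<close>)
  then have "cup_sum \<alpha> \<beta> (subcell c ?u) P
      = (\<Sum>(\<phi>, \<psi>)\<in>sign_pairs (snd c) (P(j := {(Bu, Bu)})).
           \<alpha> (subcell c (\<phi>(j := e))) * \<beta> (subcell c (\<psi>(j := e))))"
    using sign_pairs_insert[of j "snd c - {j}" P] assms(1)
    by (simp add: cup_sum_def snd_face insert_absorb)
  also have "\<dots> = cup_sum \<alpha> \<beta> c (P(j := {(e, e)}))"
    unfolding cup_sum_def by (rule sum_sign_pairs_fun_upd[OF assms(1)])
  finally show ?thesis .
qed

lemma coboundary_dirs_subcell:
  assumes "finite (snd c)"
  shows "coboundary_dirs \<alpha> (subcell c \<phi>)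
       = (\<Sum>i\<in>snd c. if \<phi> i = Bu then \<Sum>e\<in>{Pl, Mi}. \<alpha> (subcell c (\<phi>(i := e))) else 0)"
proof -
  have "subcell (subcell c \<phi>) ((\<lambda>_. Bu)(i := e)) = subcell c (\<phi>(i := e))" if "\<phi> i = Bu" for i e
    unfolding subcell_subcell
    by (rule arg_cong[where f = "subcell c"]) (use that in \<open>auto simp: fun_eq_iff\<close>)
  then show ?thesis
    by (simp add: coboundary_dirs_def snd_subcell sum.inter_filter[OF assms] cong: if_cong)
qed

lemma cup_sum_coboundary_left_at:
  assumes i: "i \<in> snd c"
  shows "(\<Sum>(\<phi>, \<psi>)\<in>sign_pairs (snd c) (P(i := {q})).
            if \<phi> i = Bu then \<Sum>e\<in>{Pl, Mi}. \<alpha> (subcell c (\<phi>(i := e))) * \<beta> (subcell c \<psi>) else 0)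
       = (if fst q = Bu then \<Sum>e\<in>{Pl, Mi}. cup_sum \<alpha> \<beta> c (P(i := {(e, snd q)})) else 0)"
proof (cases "fst q = Bu")
  case True
  let ?A = "sign_pairs (snd c) (P(i := {q}))"
  have "(if \<phi> i = Bu then \<Sum>e\<in>{Pl, Mi}. \<alpha> (subcell c (\<phi>(i := e))) * \<beta> (subcell c \<psi>) else 0)
      = (\<Sum>e\<in>{Pl, Mi}. \<alpha> (subcell c (\<phi>(i := e))) * \<beta> (subcell c (\<psi>(i := snd q))))"
    if "(\<phi>, \<psi>) \<in> ?A" for \<phi> \<psi>
    using sign_pairs_fun_upd_singleton[OF that i] True by (simp add: fun_upd_idem)
  then have "(\<Sum>(\<phi>, \<psi>)\<in>?A.
        if \<phi> i = Bu then \<Sum>e\<in>{Pl, Mi}. \<alpha> (subcell c (\<phi>(i := e))) * \<beta> (subcell c \<psi>) else 0)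
      = (\<Sum>e\<in>{Pl, Mi}. \<Sum>(\<phi>, \<psi>)\<in>?A. \<alpha> (subcell c (\<phi>(i := e))) * \<beta> (subcell c (\<psi>(i := snd q))))"
    by (subst sum.swap) (auto intro!: sum.cong)
  also have "\<dots> = (\<Sum>e\<in>{Pl, Mi}. cup_sum \<alpha> \<beta> c (P(i := {(e, snd q)})))"
    unfolding cup_sum_def by (intro sum.cong refl sum_sign_pairs_fun_upd i)
  finally show ?thesis
    using True by simp
next
  case False
  then show ?thesis
    by (auto dest: sign_pairs_fun_upd_singleton[OF _ i] intro!: sum.neutral)
qed

lemma cup_sum_coboundary_left:
  assumes "finite (snd c)"
  shows "cup_sum (coboundary_dirs \<alpha>) \<beta> c P =
    (\<Sum>i\<in>snd c. \<Sum>q\<in>P i.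
       if fst q = Bu then \<Sum>e\<in>{Pl, Mi}. cup_sum \<alpha> \<beta> c (P(i := {(e, snd q)})) else 0)"
proof -
  let ?t = "\<lambda>i (\<phi>, \<psi>). if \<phi> i = Bu
      then \<Sum>e\<in>{Pl, Mi}. \<alpha> (subcell c (\<phi>(i := e))) * \<beta> (subcell c \<psi>) else 0"
  have "cup_sum (coboundary_dirs \<alpha>) \<beta> c P = (\<Sum>x\<in>sign_pairs (snd c) P. \<Sum>i\<in>snd c. ?t i x)"
    unfolding cup_sum_def coboundary_dirs_subcell[OF assms]
    by (intro sum.cong refl) (auto simp: sum_distrib_right distrib_right intro!: sum.cong)
  also have "\<dots> = (\<Sum>i\<in>snd c. \<Sum>q\<in>P i. \<Sum>x\<in>sign_pairs (snd c) (P(i := {q})). ?t i x)"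
    by (subst sum.swap) (intro sum.cong refl sum_sign_pairs_split assms)
  also have "\<dots> = (\<Sum>i\<in>snd c. \<Sum>q\<in>P i.
       if fst q = Bu then \<Sum>e\<in>{Pl, Mi}. cup_sum \<alpha> \<beta> c (P(i := {(e, snd q)})) else 0)"
    by (intro sum.cong refl) (simp only: cup_sum_coboundary_left_at)
  finally show ?thesis .
qed

lemma cup_sum_coboundary_right:
  assumes "finite (snd c)"
  shows "cup_sum \<alpha> (coboundary_dirs \<beta>) c P =
    (\<Sum>i\<in>snd c. \<Sum>q\<in>P i.
       if snd q = Bu then \<Sum>e\<in>{Pl, Mi}. cup_sum \<alpha> \<beta> c (P(i := {(fst q, e)})) else 0)"
proof -
  have swap_upd: "(\<lambda>j. prod.swap ` ((\<lambda>j. prod.swap ` P j)(i := {(a, b)})) j) = P(i := {(b, a)})"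
    for i a b
    by (auto simp: fun_eq_iff image_image)
  have "cup_sum \<alpha> (coboundary_dirs \<beta>) c P = cup_sum (coboundary_dirs \<beta>) \<alpha> c (\<lambda>j. prod.swap ` P j)"
    by (rule cup_sum_swap)
  also have "\<dots> = (\<Sum>i\<in>snd c. \<Sum>q\<in>prod.swap ` P i.
       if fst q = Bu then \<Sum>e\<in>{Pl, Mi}. cup_sum \<alpha> \<beta> c (P(i := {(snd q, e)})) else 0)"
    unfolding cup_sum_coboundary_left[OF assms] cup_sum_swap[of \<beta> \<alpha>] swap_upd ..
  also have "\<dots> = (\<Sum>i\<in>snd c. \<Sum>q\<in>P i.
       if snd q = Bu then \<Sum>e\<in>{Pl, Mi}. cup_sum \<alpha> \<beta> c (P(i := {(fst q, e)})) else 0)"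
    by (simp add: sum.reindex cong: if_cong)
  finally show ?thesis .
qed

lemma coboundary_dirs_cup_dirs:
  assumes fin: "finite (snd c)"
  shows "coboundary_dirs (cup_dirs m \<alpha> \<beta>) c
       = (\<Sum>L | L \<subseteq> snd c \<and> card L = m. \<Sum>i\<in>snd c.
            if i \<notin> L then \<Sum>e\<in>{Pl, Mi}. cup_sum \<alpha> \<beta> c ((cup_letters L)(i := {(e, e)})) else 0)"
proof -
  let ?Ls = "{L. L \<subseteq> snd c \<and> card L = m}"
  let ?f = "\<lambda>L i e. cup_sum \<alpha> \<beta> c ((cup_letters L)(i := {(e, e)}))"
  have fin_Ls: "finite ?Ls"
    by (rule finite_subset[of _ "Pow (snd c)"]) (auto simp: fin)
  have face_cup: "cup_dirs m \<alpha> \<beta> (subcell c ((\<lambda>_. Bu)(j := e)))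
      = (\<Sum>L\<in>?Ls. if j \<notin> L then ?f L j e else 0)"
    if "j \<in> snd c" "e \<in> {Pl, Mi}" for j e
  proof -
    have "{L. L \<subseteq> snd (subcell c ((\<lambda>_. Bu)(j := e))) \<and> card L = m} = {L \<in> ?Ls. j \<notin> L}"
      using that by (auto simp: snd_subcell)
    moreover have "e \<noteq> Bu"
      using that(2) by auto
    ultimately show ?thesis
      using that(1) fin_Ls by (simp add: cup_dirs_def cup_sum_subcell sum.inter_filter[symmetric])
  qed
  have "coboundary_dirs (cup_dirs m \<alpha> \<beta>) c
      = (\<Sum>j\<in>snd c. \<Sum>e\<in>{Pl, Mi}. \<Sum>L\<in>?Ls. if j \<notin> L then ?f L j e else 0)"
    unfolding coboundary_dirs_def by (intro sum.cong refl face_cup)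
  also have "\<dots> = (\<Sum>j\<in>snd c. \<Sum>L\<in>?Ls. \<Sum>e\<in>{Pl, Mi}. if j \<notin> L then ?f L j e else 0)"
    by (intro sum.cong refl sum.swap)
  also have "\<dots> = (\<Sum>j\<in>snd c. \<Sum>L\<in>?Ls. if j \<notin> L then \<Sum>e\<in>{Pl, Mi}. ?f L j e else 0)"
    by (intro sum.cong refl) auto
  also have "\<dots> = (\<Sum>L\<in>?Ls. \<Sum>i\<in>snd c. if i \<notin> L then \<Sum>e\<in>{Pl, Mi}. ?f L i e else 0)"
    by (rule sum.swap)
  finally show ?thesis .
qed

definition single_bullet_pairs :: "(sgn \<times> sgn) set" where
  "single_bullet_pairs = {(Pl, Bu), (Mi, Bu), (Bu, Pl), (Bu, Mi)}"

(* Off L the six terms cancel in pairs; on L they are the four pairs with a single bullet. *)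
lemma cup_letters_leibniz:
  assumes "finite (snd c)" "i \<in> snd c"
  shows "(if i \<notin> L then \<Sum>e\<in>{Pl, Mi}. cup_sum \<alpha> \<beta> c ((cup_letters L)(i := {(e, e)})) else 0)
     + (\<Sum>q\<in>cup_letters L i. if fst q = Bu
          then \<Sum>e\<in>{Pl, Mi}. cup_sum \<alpha> \<beta> c ((cup_letters L)(i := {(e, snd q)})) else 0)
     + (\<Sum>q\<in>cup_letters L i. if snd q = Bu
          then \<Sum>e\<in>{Pl, Mi}. cup_sum \<alpha> \<beta> c ((cup_letters L)(i := {(fst q, e)})) else 0)
     = (if i \<in> L then cup_sum \<alpha> \<beta> c ((cup_letters L)(i := single_bullet_pairs)) else 0)"
proof (cases "i \<in> L")
  case True
  then show ?thesis
    using cup_sum_split[OF assms, of \<alpha> \<beta> "(cup_letters L)(i := single_bullet_pairs)"]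
    by (simp add: single_bullet_pairs_def cup_letters_def ac_simps)
next
  case False
  then show ?thesis
    using sigma_cases[of L i] by (auto simp: cup_letters_def ac_simps)
qed

lemma sum_subsets_card_Suc:
  assumes "finite S"
  shows "(\<Sum>L | L \<subseteq> S \<and> card L = Suc k. \<Sum>i\<in>L. f L i)
       = (\<Sum>L | L \<subseteq> S \<and> card L = k. \<Sum>i\<in>S - L. f (insert i L) i)"
proof -
  let ?A = "Sigma {L. L \<subseteq> S \<and> card L = k} (\<lambda>L. S - L)"
  let ?B = "Sigma {L. L \<subseteq> S \<and> card L = Suc k} (\<lambda>L. L)"
  have fin: "finite L" if "L \<subseteq> S" for L
    using assms that by (rule finite_subset[rotated])
  have "bij_betw (\<lambda>(L, i). (insert i L, i)) ?A ?B"
    by (rule bij_betw_byWitness[where f' = "\<lambda>(L, i). (L - {i}, i)"])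
      (auto simp: fin card_insert_if card_Diff_singleton_if)
  then have "(\<Sum>(L, i)\<in>?B. f L i) = (\<Sum>(L, i)\<in>?A. f (insert i L) i)"
    by (auto simp: sum.reindex_bij_betw[symmetric] case_prod_beta)
  then show ?thesis
    using assms by (simp add: sum.Sigma fin)
qed

definition cup_letters_swapped_from :: "nat set \<Rightarrow> nat \<Rightarrow> nat \<Rightarrow> (sgn \<times> sgn) set" where
  "cup_letters_swapped_from L t s =
     (if s < t then cup_letters L s else prod.swap ` cup_letters L s)"

(* Adding i to L flips sigma exactly above i, and the single-bullet pairs at i are the letters of
   L at i together with their swaps. *)
lemma cup_sum_insert_letter:
  assumes fin: "finite (snd c)" and i: "i \<in> snd c - L" and "finite L"
  shows "cup_sum \<alpha> \<beta> c ((cup_letters (insert i L))(i := single_bullet_pairs))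
       = cup_sum \<alpha> \<beta> c (cup_letters_swapped_from L (Suc i))
         + cup_sum \<alpha> \<beta> c (cup_letters_swapped_from L i)"
proof -
  let ?R = "cup_letters L" and ?G = "cup_letters_swapped_from L"
  have "sign_pairs (snd c) ((cup_letters (insert i L))(i := single_bullet_pairs))
      = sign_pairs (snd c) ((?G i)(i := single_bullet_pairs))"
    by (rule sign_pairs_cong) (use i sigma_cases[of L] in
        \<open>auto simp: cup_letters_swapped_from_def cup_letters_def sigma_insert[OF \<open>finite L\<close>]\<close>)
  then have "cup_sum \<alpha> \<beta> c ((cup_letters (insert i L))(i := single_bullet_pairs))
      = (\<Sum>q\<in>?R i \<union> prod.swap ` ?R i. cup_sum \<alpha> \<beta> c ((?G i)(i := {q})))"
    using cup_sum_split[OF fin, of i \<alpha> \<beta> "(?G i)(i := single_bullet_pairs)"] i sigma_cases[of L i]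
    by (auto simp: cup_sum_def single_bullet_pairs_def cup_letters_def insert_commute)
  also have "\<dots> = (\<Sum>q\<in>?R i. cup_sum \<alpha> \<beta> c ((?G i)(i := {q})))
                + (\<Sum>q\<in>prod.swap ` ?R i. cup_sum \<alpha> \<beta> c ((?G i)(i := {q})))"
    using i sigma_cases[of L i] by (intro sum.union_disjoint) (auto simp: cup_letters_def)
  also have "\<dots> = cup_sum \<alpha> \<beta> c ((?G i)(i := ?R i)) + cup_sum \<alpha> \<beta> c (?G i)"
    using cup_sum_split[OF fin, of i \<alpha> \<beta> "(?G i)(i := ?R i)"] cup_sum_split[OF fin, of i \<alpha> \<beta> "?G i"] i
    by (simp add: cup_letters_swapped_from_def)
  also have "(?G i)(i := ?R i) = ?G (Suc i)"
    by (auto simp: fun_eq_iff cup_letters_swapped_from_def)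
  finally show ?thesis .
qed

lemma cup_sum_telescope:
  assumes fin: "finite (snd c)" and "L \<subseteq> snd c"
  shows "(\<Sum>i\<in>snd c - L. cup_sum \<alpha> \<beta> c ((cup_letters (insert i L))(i := single_bullet_pairs)))
       = cup_sum \<alpha> \<beta> c (cup_letters L) + cup_sum \<beta> \<alpha> c (cup_letters L)"
proof -
  define g where "g t = cup_sum \<alpha> \<beta> c (cup_letters_swapped_from L t)" for t
  have "finite L"
    using assms by (rule finite_subset[rotated])
  have const: "g (Suc t) = g t" if "t \<notin> snd c - L" for t
    unfolding g_def cup_sum_def
    by (rule arg_cong[OF sign_pairs_cong])
      (use that in \<open>auto simp: cup_letters_swapped_from_def cup_letters_def less_Suc_eq\<close>)
  obtain n where n: "snd c \<subseteq> {..<n}"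
    using fin by (auto simp: finite_nat_set_iff_bounded)
  have "(\<Sum>i\<in>snd c - L. cup_sum \<alpha> \<beta> c ((cup_letters (insert i L))(i := single_bullet_pairs)))
      = (\<Sum>i<n. g (Suc i) - g i)"
    using n const
    by (intro sum.mono_neutral_cong_left) (auto simp: g_def cup_sum_insert_letter[OF fin _ \<open>finite L\<close>])
  also have "\<dots> = g n + g 0"
    using sum_lessThan_telescope[of g n] by simp
  also have "g n = cup_sum \<alpha> \<beta> c (cup_letters L)"
    unfolding g_def cup_sum_def
    by (rule arg_cong[OF sign_pairs_cong]) (use n in \<open>auto simp: cup_letters_swapped_from_def\<close>)
  also have "g 0 = cup_sum \<beta> \<alpha> c (cup_letters L)"
    unfolding cup_sum_swap[of \<beta> \<alpha>] g_def cup_letters_swapped_from_def by simp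
  finally show ?thesis .
qed

lemma coboundary_cup_dirs:
  assumes fin: "finite (snd c)"
  shows "coboundary_dirs (cup_dirs (Suc k) \<alpha> \<beta>) c =
    cup_dirs (Suc k) (coboundary_dirs \<alpha>) \<beta> c + cup_dirs (Suc k) \<alpha> (coboundary_dirs \<beta>) c
    + cup_dirs k \<alpha> \<beta> c + cup_dirs k \<beta> \<alpha> c"
proof -
  let ?sp = "cup_sum \<alpha> \<beta> c" and ?U = single_bullet_pairs
  let ?Ls = "\<lambda>k. {L. L \<subseteq> snd c \<and> card L = k}"
  have "coboundary_dirs (cup_dirs (Suc k) \<alpha> \<beta>) c
        + cup_dirs (Suc k) (coboundary_dirs \<alpha>) \<beta> c + cup_dirs (Suc k) \<alpha> (coboundary_dirs \<beta>) c
      = (\<Sum>L\<in>?Ls (Suc k). \<Sum>i\<in>snd c. if i \<in> L then ?sp ((cup_letters L)(i := ?U)) else 0)"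
    unfolding coboundary_dirs_cup_dirs[OF fin] cup_dirs_def cup_sum_coboundary_left[OF fin]
      cup_sum_coboundary_right[OF fin] sum.distrib[symmetric]
    by (intro sum.cong refl cup_letters_leibniz[OF fin])
  also have "\<dots> = (\<Sum>L\<in>?Ls (Suc k). \<Sum>i\<in>L. ?sp ((cup_letters L)(i := ?U)))"
    by (rule sum.cong[OF refl]) (simp add: sum.inter_restrict[OF fin, symmetric] Int_absorb1)
  also have "\<dots> = (\<Sum>L\<in>?Ls k. \<Sum>i\<in>snd c - L. ?sp ((cup_letters (insert i L))(i := ?U)))"
    by (rule sum_subsets_card_Suc[OF fin])
  also have "\<dots> = (\<Sum>L\<in>?Ls k. ?sp (cup_letters L) + cup_sum \<beta> \<alpha> c (cup_letters L))"
    by (intro sum.cong refl cup_sum_telescope fin) auto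
  also have "\<dots> = cup_dirs k \<alpha> \<beta> c + cup_dirs k \<beta> \<alpha> c"
    by (simp add: cup_dirs_def sum.distrib)
  finally show ?thesis
    unfolding bit_add_eq_iff by (simp add: add.assoc)
qed

theorem proposition2:
  fixes d m p q :: nat and \<alpha> \<beta> :: "cell \<Rightarrow> bit" and c :: cell
  assumes "d \<ge> 1" and "m \<ge> 1"
    and "cochain d p \<alpha>" and "cochain d q \<beta>"
    and "valid_cell d c"
  shows "coboundary (cup m \<alpha> \<beta>) c =
           cup m (coboundary \<alpha>) \<beta> c + cup m \<alpha> (coboundary \<beta>) c
           + cup (m - 1) \<alpha> \<beta> c + cup (m - 1) \<beta> \<alpha> c"
proof -
  \<comment> \<open>The identity is formal: only the finiteness of the directions of c is used.\<close>
  obtain k where m: "m = Suc k"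
    using assms(2) by (cases m) auto
  have fin: "finite (snd c)"
    using assms(5) by (auto simp: valid_cell_def intro: finite_subset)
  then have fin_subcell: "finite (snd (subcell c \<phi>))" for \<phi>
    by (simp add: snd_subcell)
  have "coboundary (cup m \<alpha> \<beta>) c = coboundary_dirs (cup_dirs m \<alpha> \<beta>) c"
    unfolding coboundary_eq_coboundary_dirs[OF fin] coboundary_dirs_def
      cup_eq_cup_dirs[OF fin_subcell] ..
  moreover have "cup m (coboundary \<alpha>) \<beta> c = cup_dirs m (coboundary_dirs \<alpha>) \<beta> c"
    and "cup m \<alpha> (coboundary \<beta>) c = cup_dirs m \<alpha> (coboundary_dirs \<beta>) c"
    unfolding cup_eq_cup_dirs[OF fin] cup_dirs_def cup_sum_def
      coboundary_eq_coboundary_dirs[OF fin_subcell] by rule+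
  ultimately show ?thesis
    using coboundary_cup_dirs[OF fin, of k \<alpha> \<beta>] by (simp add: m cup_eq_cup_dirs[OF fin])
qed

end
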